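(* Let $k>1$ be an integer. Every vertex $v$ of $\mathcal F_k$ is a cut vertex: deleting $v$ (and its incident edges) from the connected component of $\mathcal F_k$ containing $v$ leaves a disconnected graph.
   Context: The vertex set $V$ consists of all reduced fractions $p/q$ with $p,q\in\mathbb Z$, $\gcd(p,q)=1$, together with $1/0$; here $p/q$ and $(-p)/(-q)$ denote the same vertex. For vertices define $d(p/q,a/b)=|pb-qa|$. The graph $\mathcal F_k$ has vertex set $V$, with an edge between $p/q$ and $a/b$ exactly when $d(p/q,a/b)=k$. *)

theory Defs
  imports Main
begin

text \<open>Vertices of the Farey-type graph: reduced fractions p/q, with the identification
  p/q = (-p)/(-q), represented by the normalized pair (p,q) with q > 0, or (1,0) for 1/0.\<close>
definition Fverts :: "(int \<times> int) set" where
  "Fverts = {(p, q). coprime p q \<and> (0 < q \<or> (q = 0 \<and> p = 1))}"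

definition fdist :: "int \<times> int \<Rightarrow> int \<times> int \<Rightarrow> int" where
  "fdist x y = \<bar>fst x * snd y - snd x * fst y\<bar>"

definition Fadj :: "int \<Rightarrow> int \<times> int \<Rightarrow> int \<times> int \<Rightarrow> bool" where
  "Fadj k x y \<longleftrightarrow> x \<in> Fverts \<and> y \<in> Fverts \<and> fdist x y = k"

definition conn_in :: "int \<Rightarrow> (int \<times> int) set \<Rightarrow> int \<times> int \<Rightarrow> int \<times> int \<Rightarrow> bool" where
  "conn_in k S = (\<lambda>x y. Fadj k x y \<and> x \<in> S \<and> y \<in> S)\<^sup>*\<^sup>*"

definition Fcomponent :: "int \<Rightarrow> int \<times> int \<Rightarrow> (int \<times> int) set" where
  "Fcomponent k v = {w. conn_in k Fverts v w}"

end

theory Submission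
  imports Defs "HOL-Library.Product_Plus"
begin

text \<open>A unimodular change of coordinates is an automorphism of \<open>F\<^sub>k\<close> carrying \<open>1/0\<close> to \<open>v\<close>,
  so it suffices to treat \<open>v = 1/0\<close>, whose neighbours are the fractions with denominator \<open>k\<close>.
  The fractions \<open>P/Q\<close> with \<open>k dvd Q\<close> and \<open>0 < P/Q < 1\<close> form a set that is closed under
  adjacency in \<open>F\<^sub>k\<close> away from \<open>1/0\<close>: from \<open>k dvd P\<^sub>1 Q\<^sub>2 - Q\<^sub>1 P\<^sub>2\<close> and \<open>coprime P\<^sub>1 k\<close>
  we get \<open>k dvd Q\<^sub>2\<close>, and if \<open>P\<^sub>2 \<le> 0\<close> the determinant would be at least \<open>Q\<^sub>2 \<ge> k\<close>, with
  equality only at \<open>0/1\<close>; reflecting \<open>P/Q \<mapsto> 1 - P/Q\<close> gives the upper bound.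
  Hence the neighbours \<open>1/k\<close> and \<open>-1/k\<close> of \<open>1/0\<close> cannot be joined by a path avoiding \<open>1/0\<close>.\<close>

definition det2 :: "int \<times> int \<Rightarrow> int \<times> int \<Rightarrow> int" where
  "det2 x y = fst x * snd y - snd x * fst y"

lemma fdist_eq_abs_det2: "fdist x y = \<bar>det2 x y\<bar>"
  by (simp add: fdist_def det2_def)

definition lin :: "int \<Rightarrow> int \<Rightarrow> int \<Rightarrow> int \<Rightarrow> int \<times> int \<Rightarrow> int \<times> int" where
  "lin \<alpha> \<beta> \<gamma> \<delta> x = (\<alpha> * fst x + \<beta> * snd x, \<gamma> * fst x + \<delta> * snd x)"

lemma lin_uminus: "lin \<alpha> \<beta> \<gamma> \<delta> (- x) = - lin \<alpha> \<beta> \<gamma> \<delta> x"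
  by (simp add: lin_def)

lemma det2_lin: "det2 (lin \<alpha> \<beta> \<gamma> \<delta> x) (lin \<alpha> \<beta> \<gamma> \<delta> y) = (\<alpha> * \<delta> - \<beta> * \<gamma>) * det2 x y"
  by (simp add: det2_def lin_def algebra_simps)

lemma lin_inverse:
  assumes "\<alpha> * \<delta> - \<beta> * \<gamma> = 1"
  shows "lin \<delta> (- \<beta>) (- \<gamma>) \<alpha> (lin \<alpha> \<beta> \<gamma> \<delta> x) = x"
proof -
  have "lin \<delta> (- \<beta>) (- \<gamma>) \<alpha> (lin \<alpha> \<beta> \<gamma> \<delta> x) =
      ((\<alpha> * \<delta> - \<beta> * \<gamma>) * fst x, (\<alpha> * \<delta> - \<beta> * \<gamma>) * snd x)"
    by (simp add: lin_def algebra_simps)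
  then show ?thesis
    using assms by simp
qed

lemma coprime_lin:
  assumes det: "\<alpha> * \<delta> - \<beta> * \<gamma> = 1" and "coprime (fst x) (snd x)"
  shows "coprime (fst (lin \<alpha> \<beta> \<gamma> \<delta> x)) (snd (lin \<alpha> \<beta> \<gamma> \<delta> x))"
proof (rule coprimeI)
  fix c
  assume "c dvd fst (lin \<alpha> \<beta> \<gamma> \<delta> x)" and "c dvd snd (lin \<alpha> \<beta> \<gamma> \<delta> x)"
  then have "c dvd fst (lin \<delta> (- \<beta>) (- \<gamma>) \<alpha> (lin \<alpha> \<beta> \<gamma> \<delta> x))"
    and "c dvd snd (lin \<delta> (- \<beta>) (- \<gamma>) \<alpha> (lin \<alpha> \<beta> \<gamma> \<delta> x))"
    unfolding lin_def[of \<delta>] by simp_all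
  then have "c dvd fst x" and "c dvd snd x"
    by (simp_all only: lin_inverse[OF det])
  with \<open>coprime (fst x) (snd x)\<close> show "is_unit c"
    by (rule coprime_common_divisor)
qed

definition Fnorm :: "int \<times> int \<Rightarrow> int \<times> int" where
  "Fnorm z = (if snd z < 0 \<or> (snd z = 0 \<and> fst z < 0) then - z else z)"

lemma Fnorm_cases: "Fnorm z = z \<or> Fnorm z = - z"
  by (simp add: Fnorm_def)

lemma Fnorm_uminus: "Fnorm (- z) = Fnorm z"
  by (cases z) (auto simp: Fnorm_def)

lemma Fnorm_Fverts: "z \<in> Fverts \<Longrightarrow> Fnorm z = z"
  by (auto simp: Fnorm_def Fverts_def)

lemma Fnorm_in_Fverts:
  assumes "coprime (fst z) (snd z)"
  shows "Fnorm z \<in> Fverts"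
proof -
  obtain p q where z: "z = (p, q)"
    by fastforce
  show ?thesis
  proof (cases "q = 0")
    case True
    with assms z have "p = 1 \<or> p = -1"
      by (simp add: abs_if split: if_splits)
    with True z show ?thesis
      by (auto simp: Fnorm_def Fverts_def)
  qed (use assms z in \<open>auto simp: Fnorm_def Fverts_def\<close>)
qed

lemma fdist_Fnorm: "fdist (Fnorm x) (Fnorm y) = fdist x y"
  using Fnorm_cases[of x] Fnorm_cases[of y]
  by (auto simp: fdist_def abs_minus_commute algebra_simps)

definition Fmap :: "int \<Rightarrow> int \<Rightarrow> int \<Rightarrow> int \<Rightarrow> int \<times> int \<Rightarrow> int \<times> int" where
  "Fmap \<alpha> \<beta> \<gamma> \<delta> x = Fnorm (lin \<alpha> \<beta> \<gamma> \<delta> x)"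

lemma Fmap_in_Fverts:
  assumes "\<alpha> * \<delta> - \<beta> * \<gamma> = 1" and "x \<in> Fverts"
  shows "Fmap \<alpha> \<beta> \<gamma> \<delta> x \<in> Fverts"
  unfolding Fmap_def
  by (rule Fnorm_in_Fverts, rule coprime_lin[OF assms(1)]) (use assms(2) in \<open>auto simp: Fverts_def\<close>)

lemma fdist_Fmap:
  assumes "\<alpha> * \<delta> - \<beta> * \<gamma> = 1"
  shows "fdist (Fmap \<alpha> \<beta> \<gamma> \<delta> x) (Fmap \<alpha> \<beta> \<gamma> \<delta> y) = fdist x y"
  unfolding Fmap_def fdist_Fnorm using assms by (simp add: fdist_eq_abs_det2 det2_lin)

lemma Fadj_Fmap:
  assumes "\<alpha> * \<delta> - \<beta> * \<gamma> = 1" and "Fadj k x y"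
  shows "Fadj k (Fmap \<alpha> \<beta> \<gamma> \<delta> x) (Fmap \<alpha> \<beta> \<gamma> \<delta> y)"
  using assms by (simp add: Fadj_def Fmap_in_Fverts fdist_Fmap)

lemma Fmap_inverse:
  assumes "\<alpha> * \<delta> - \<beta> * \<gamma> = 1" and "x \<in> Fverts"
  shows "Fmap \<delta> (- \<beta>) (- \<gamma>) \<alpha> (Fmap \<alpha> \<beta> \<gamma> \<delta> x) = x"
  using Fnorm_cases[of "lin \<alpha> \<beta> \<gamma> \<delta> x"]
  by (auto simp: Fmap_def lin_uminus Fnorm_uminus lin_inverse[OF assms(1)] Fnorm_Fverts[OF assms(2)])

lemma Fautomorphism_from_infinity:
  assumes "v \<in> Fverts"
  obtains \<phi> \<psi> where "\<And>x y. Fadj k x y \<Longrightarrow> Fadj k (\<phi> x) (\<phi> y)"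
    and "\<And>x y. Fadj k x y \<Longrightarrow> Fadj k (\<psi> x) (\<psi> y)"
    and "\<And>x. x \<in> Fverts \<Longrightarrow> \<phi> (\<psi> x) = x" and "\<And>x. x \<in> Fverts \<Longrightarrow> \<psi> (\<phi> x) = x"
    and "\<psi> (1, 0) = v"
proof -
  obtain r s where v: "v = (r, s)"
    by fastforce
  with assms have "gcd r s = 1"
    by (simp add: Fverts_def)
  then obtain a b where det: "r * b - a * s = 1"
    using bezout_int[of r s] by (metis diff_minus_eq_add minus_mult_left mult.commute)
  have det': "b * r - (- a) * (- s) = 1"
    using det by (simp add: algebra_simps)
  show thesis
  proof (rule that[of "Fmap b (- a) (- s) r" "Fmap r a s b"])
    show "\<And>x. x \<in> Fverts \<Longrightarrow> Fmap b (- a) (- s) r (Fmap r a s b x) = x"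
      using Fmap_inverse[OF det] by simp
    show "\<And>x. x \<in> Fverts \<Longrightarrow> Fmap r a s b (Fmap b (- a) (- s) r x) = x"
      using Fmap_inverse[OF det'] by simp
    show "Fmap r a s b (1, 0) = v"
      using Fnorm_Fverts[OF assms] by (simp add: Fmap_def lin_def v)
  qed (use Fadj_Fmap det det' in blast)+
qed

definition Fstrip :: "int \<Rightarrow> int \<times> int \<Rightarrow> bool" where
  "Fstrip k z \<longleftrightarrow> k dvd snd z \<and> 0 < fst z \<and> fst z < snd z"

lemma dvd_denominator_step:
  fixes k P\<^sub>1 Q\<^sub>1 P\<^sub>2 Q\<^sub>2 :: int
  assumes "k dvd Q\<^sub>1" and "coprime P\<^sub>1 Q\<^sub>1" and "\<bar>P\<^sub>1 * Q\<^sub>2 - Q\<^sub>1 * P\<^sub>2\<bar> = k"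
  shows "k dvd Q\<^sub>2"
proof -
  have "k dvd P\<^sub>1 * Q\<^sub>2 - Q\<^sub>1 * P\<^sub>2"
    using assms(3) by (metis dvd_abs_iff dvd_refl)
  moreover have "k dvd Q\<^sub>1 * P\<^sub>2"
    using assms(1) by simp
  ultimately have "k dvd P\<^sub>1 * Q\<^sub>2"
    by (metis diff_add_cancel dvd_add)
  moreover have "coprime k P\<^sub>1"
    using assms(1,2) by (metis coprime_commute coprime_divisors dvd_refl)
  ultimately show ?thesis
    by (simp add: coprime_dvd_mult_right_iff)
qed

lemma numerator_pos_step:
  fixes k P\<^sub>1 Q\<^sub>1 P\<^sub>2 Q\<^sub>2 :: int
  assumes "k > 1" and "0 < P\<^sub>1" and "0 < Q\<^sub>1" and "0 < Q\<^sub>2" and "k dvd Q\<^sub>2"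
    and "coprime P\<^sub>2 Q\<^sub>2" and "\<bar>P\<^sub>1 * Q\<^sub>2 - Q\<^sub>1 * P\<^sub>2\<bar> = k"
  shows "0 < P\<^sub>2"
proof (rule ccontr)
  assume "\<not> 0 < P\<^sub>2"
  then have "Q\<^sub>1 * P\<^sub>2 \<le> 0"
    using assms(3) by (simp add: mult_nonneg_nonpos)
  moreover have "k \<le> Q\<^sub>2"
    using assms(4,5) by (simp add: zdvd_imp_le)
  moreover have "Q\<^sub>2 \<le> P\<^sub>1 * Q\<^sub>2"
    using assms(2,4) by simp
  ultimately have "Q\<^sub>1 * P\<^sub>2 = 0"
    using assms(7) by linarith
  then have "P\<^sub>2 = 0"
    using assms(3) by simp
  with assms(4,6) have "Q\<^sub>2 = 1"
    by simp
  with \<open>k \<le> Q\<^sub>2\<close> assms(1) show False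
    by simp
qed

lemma Fstrip_Fadj:
  assumes "k > 1" and "Fadj k x y" and "y \<noteq> (1, 0)" and "Fstrip k x"
  shows "Fstrip k y"
proof -
  obtain P\<^sub>1 Q\<^sub>1 P\<^sub>2 Q\<^sub>2 where x: "x = (P\<^sub>1, Q\<^sub>1)" and y: "y = (P\<^sub>2, Q\<^sub>2)"
    by fastforce
  from assms have cop\<^sub>1: "coprime P\<^sub>1 Q\<^sub>1" and cop\<^sub>2: "coprime P\<^sub>2 Q\<^sub>2" and "0 < Q\<^sub>2"
    and det: "\<bar>P\<^sub>1 * Q\<^sub>2 - Q\<^sub>1 * P\<^sub>2\<bar> = k" and "k dvd Q\<^sub>1" and "0 < P\<^sub>1" and "P\<^sub>1 < Q\<^sub>1"
    by (auto simp: Fadj_def Fverts_def fdist_def Fstrip_def x y)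
  have "k dvd Q\<^sub>2"
    using dvd_denominator_step[OF \<open>k dvd Q\<^sub>1\<close> cop\<^sub>1 det] .
  moreover have "0 < P\<^sub>2"
    using numerator_pos_step[OF assms(1) _ _ \<open>0 < Q\<^sub>2\<close> \<open>k dvd Q\<^sub>2\<close> cop\<^sub>2 det]
      \<open>0 < P\<^sub>1\<close> \<open>P\<^sub>1 < Q\<^sub>1\<close> by simp
  \<comment> \<open>The reflection \<open>P/Q \<mapsto> 1 - P/Q\<close> only changes the sign of the determinant.\<close>
  moreover have "0 < Q\<^sub>2 - P\<^sub>2"
  proof (rule numerator_pos_step[OF assms(1) _ _ \<open>0 < Q\<^sub>2\<close> \<open>k dvd Q\<^sub>2\<close>])
    show "coprime (Q\<^sub>2 - P\<^sub>2) Q\<^sub>2"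
      using cop\<^sub>2 by (simp add: coprime_iff_gcd_eq_1 gcd_diff2)
    show "\<bar>(Q\<^sub>1 - P\<^sub>1) * Q\<^sub>2 - Q\<^sub>1 * (Q\<^sub>2 - P\<^sub>2)\<bar> = k"
      using det by (simp add: algebra_simps abs_minus_commute)
  qed (use \<open>0 < P\<^sub>1\<close> \<open>P\<^sub>1 < Q\<^sub>1\<close> in simp_all)
  ultimately show ?thesis
    by (simp add: Fstrip_def y)
qed

lemma conn_in_invariant:
  assumes "conn_in k S x y" and "I x"
    and "\<And>y z. Fadj k y z \<Longrightarrow> y \<in> S \<Longrightarrow> z \<in> S \<Longrightarrow> I y \<Longrightarrow> I z"
  shows "I y"
  using assms(1)[unfolded conn_in_def] assms(2)
  by (induction rule: rtranclp_induct) (use assms(3) in blast)+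

lemma conn_in_image:
  assumes "\<And>x y. Fadj k x y \<Longrightarrow> Fadj k (f x) (f y)" and "conn_in k S x y"
  shows "conn_in k (f ` S) (f x) (f y)"
  using assms(2)
proof (rule conn_in_invariant)
  show "conn_in k (f ` S) (f x) (f x)"
    by (simp add: conn_in_def)
  fix y z
  assume "Fadj k y z" "y \<in> S" "z \<in> S" and "conn_in k (f ` S) (f x) (f y)"
  from this(4) show "conn_in k (f ` S) (f x) (f z)"
    unfolding conn_in_def
    by (rule rtranclp.rtrancl_into_rtrancl) (simp add: assms(1) \<open>Fadj k y z\<close> \<open>y \<in> S\<close> \<open>z \<in> S\<close>)
qed

lemma Fstrip_conn_in:
  assumes "k > 1" and "conn_in k S x y" and "(1, 0) \<notin> S" and "Fstrip k x"
  shows "Fstrip k y"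
  using assms(2,4) by (rule conn_in_invariant) (use Fstrip_Fadj[OF assms(1)] assms(3) in blast)

lemma Fcomponent_subset_Fverts: "v \<in> Fverts \<Longrightarrow> Fcomponent k v \<subseteq> Fverts"
  by (auto simp: Fcomponent_def conn_in_def Fadj_def elim: rtranclp.cases)

lemma Fadj_Fcomponent:
  assumes "Fadj k v x" and "k \<noteq> 0"
  shows "x \<in> Fcomponent k v - {v}"
  using assms by (auto simp: Fcomponent_def conn_in_def Fadj_def fdist_def)

theorem proposition4p14:
  fixes k :: int and v :: "int \<times> int"
  assumes "k > 1" and "v \<in> Fverts"
  shows "\<exists>u w. u \<in> Fcomponent k v - {v} \<and> w \<in> Fcomponent k v - {v} \<and>
           \<not> conn_in k (Fcomponent k v - {v}) u w"
proof -
  obtain \<phi> \<psi> where \<phi>: "\<And>x y. Fadj k x y \<Longrightarrow> Fadj k (\<phi> x) (\<phi> y)"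
    and \<psi>: "\<And>x y. Fadj k x y \<Longrightarrow> Fadj k (\<psi> x) (\<psi> y)"
    and \<phi>\<psi>: "\<And>x. x \<in> Fverts \<Longrightarrow> \<phi> (\<psi> x) = x" and \<psi>\<phi>: "\<And>x. x \<in> Fverts \<Longrightarrow> \<psi> (\<phi> x) = x"
    and \<psi>_infinity: "\<psi> (1, 0) = v"
    using Fautomorphism_from_infinity[OF assms(2)] by metis
  define C where "C = Fcomponent k v - {v}"
  have adj: "Fadj k (1, 0) (1, k)" "Fadj k (1, 0) (-1, k)"
    using assms(1) by (auto simp: Fadj_def Fverts_def fdist_def)
  then have in_C: "\<psi> (1, k) \<in> C" "\<psi> (-1, k) \<in> C"
    unfolding C_def using \<psi> \<psi>_infinity assms(1) by (metis Fadj_Fcomponent not_one_less_zero)+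
  have "(1, 0) \<notin> \<phi> ` C"
  proof
    assume "(1, 0) \<in> \<phi> ` C"
    then obtain z where "z \<in> C" and "\<phi> z = (1, 0)"
      by (metis imageE)
    moreover have "z \<in> Fverts"
      using \<open>z \<in> C\<close> Fcomponent_subset_Fverts[OF assms(2)] by (auto simp: C_def)
    ultimately show False
      using \<psi>\<phi>[of z] \<psi>_infinity by (simp add: C_def)
  qed
  moreover have "Fstrip k (1, k)" and "\<not> Fstrip k (-1, k)"
    using assms(1) by (simp_all add: Fstrip_def)
  ultimately have "\<not> conn_in k (\<phi> ` C) (1, k) (-1, k)"
    using Fstrip_conn_in[OF assms(1)] by blast
  moreover have "\<phi> (\<psi> (1, k)) = (1, k)" and "\<phi> (\<psi> (-1, k)) = (-1, k)"
    using \<phi>\<psi> adj by (simp_all add: Fadj_def)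
  ultimately have "\<not> conn_in k C (\<psi> (1, k)) (\<psi> (-1, k))"
    using conn_in_image[where f = \<phi> and S = C, OF \<phi>] by metis
  with in_C show ?thesis
    unfolding C_def by blast
qed

end
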